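(* Let $\mathcal H$ be a real separable Hilbert space with Hilbertian basis $(e_n)_{n\in\mathbb N}$, and let $H\in\mathcal C^1(\mathbb R,\mathcal L_2(\mathcal H))$. Write $h_{i,j}(t)=\langle H(t)e_i,e_j\rangle$. Assume: (i) the function $t\mapsto \|H(t)\|_{\mathsf{HS}}$ is bounded on $\mathbb R$; (ii) the family $(h_{i,j})_{i,j\in\mathbb N}$ is balanced; (iii) there exists a pointwise bounded and balanced family of measurable real-valued functions $(g_{i,j})_{i,j\in\mathbb N}$ on $\mathbb R$ such that $$\forall i\in\mathbb N,\ \forall t\in\mathbb R,\qquad h_{i,i}'(t)=\sum_{j=0}^{+\infty}g_{i,j}(t)\,|h_{i,j}(t)|^2 .$$ Suppose there exist $T>0$ and a sign sequence $(\epsilon_\ell)_{\ell\in\mathbb N}\in\{-1,1\}^{\mathbb N}$ such that $$\forall t\geq T,\ \forall k,\ell\in\mathbb N \text{ with } k\geq \ell,\qquad \epsilon_\ell\, g_{\ell,k}(t)\geq 0 .$$ Then for every $\ell\in\mathbb N$, $$\sum_{j=0}^{+\infty}\int_T^{+\infty}|g_{\ell,j}(t)|\,|h_{\ell,j}(t)|^2\,\mathrm dt<+\infty,$$ and every diagonal term $h_{\ell,\ell}(t)$ converges as $t\to+\infty$ to a real limit $h_{\ell,\ell}(\infty)$. If in addition $$\forall \ell\in\mathbb N,\ \exists c_\ell>0,\ \forall j\neq\ell,\ \forall t\geq T,\qquad |g_{\ell,j}(t)|\geq c_\ell,$$ then for every $\ell\in\mathbb N$, $$\sum_{j\neq\ell}\int_T^{+\infty}|h_{\ell,j}(t)|^2\,\mathrm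 dt=\int_T^{+\infty}\|H(t)e_\ell-h_{\ell,\ell}(t)e_\ell\|^2\,\mathrm dt<+\infty .$$ If moreover, for every $\ell\in\mathbb N$, the function $t\mapsto\|H'(t)e_\ell\|$ is bounded, then for every $\ell\in\mathbb N$, $H(t)e_\ell\to h_{\ell,\ell}(\infty)\,e_\ell$ in $\mathcal H$ as $t\to+\infty$.
   Context: $\mathcal L_2(\mathcal H)$ denotes the space of Hilbert-Schmidt operators on $\mathcal H$ with norm $\|H\|_{\mathsf{HS}}^2=\sum_n\|He_n\|^2$. A family of real-valued functions $(g_{i,j})_{i,j\in\mathbb N}$ defined on $\mathbb R$ is called balanced if for all $i,j\in\mathbb N$ there exists $c_{i,j}\in L^\infty(\mathbb R,\mathbb R_+)$ such that $|g_{i,j}(t)|\leq c_{i,j}(t)|g_{j,i}(t)|$ for all $t\in\mathbb R$. It is called pointwise bounded if for all $t\in\mathbb R$, $\sup_{i,j}|g_{i,j}(t)|<+\infty$. *)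

theory Defs
  imports "HOL-Analysis.Analysis"
begin

definition hilbert_basis :: "(nat \<Rightarrow> 'a::{real_inner,complete_space}) \<Rightarrow> bool" where
  "hilbert_basis e \<longleftrightarrow> (\<forall>i j. inner (e i) (e j) = (if i = j then 1 else 0))
      \<and> closure (span (range e)) = UNIV"

definition is_HS :: "(nat \<Rightarrow> 'a::real_inner) \<Rightarrow> ('a \<Rightarrow> 'a) \<Rightarrow> bool" where
  "is_HS e A \<longleftrightarrow> bounded_linear A \<and> summable (\<lambda>n. (norm (A (e n)))\<^sup>2)"

definition hs_norm :: "(nat \<Rightarrow> 'a::real_inner) \<Rightarrow> ('a \<Rightarrow> 'a) \<Rightarrow> real" where
  "hs_norm e A = sqrt (\<Sum>n. (norm (A (e n)))\<^sup>2)"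

definition HS_C1 :: "(nat \<Rightarrow> 'a::real_inner) \<Rightarrow> (real \<Rightarrow> 'a \<Rightarrow> 'a) \<Rightarrow> (real \<Rightarrow> 'a \<Rightarrow> 'a) \<Rightarrow> bool" where
  "HS_C1 e H H' \<longleftrightarrow> (\<forall>t. is_HS e (H t) \<and> is_HS e (H' t))
     \<and> (\<forall>t. ((\<lambda>s. hs_norm e (\<lambda>x. H s x - H t x - (s - t) *\<^sub>R H' t x) / \<bar>s - t\<bar>) \<longlongrightarrow> 0) (at t))
     \<and> (\<forall>t. ((\<lambda>s. hs_norm e (\<lambda>x. H' s x - H' t x)) \<longlongrightarrow> 0) (at t))"

definition balanced :: "(nat \<Rightarrow> nat \<Rightarrow> real \<Rightarrow> real) \<Rightarrow> bool" where
  "balanced g \<longleftrightarrow> (\<forall>i j. \<exists>c::real \<Rightarrow> real.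
      c \<in> borel_measurable lborel \<and> (\<forall>t. c t \<ge> 0) \<and> (\<exists>B. AE t in lborel. c t \<le> B)
      \<and> (\<forall>t. \<bar>g i j t\<bar> \<le> c t * \<bar>g j i t\<bar>))"

definition pointwise_bounded :: "(nat \<Rightarrow> nat \<Rightarrow> real \<Rightarrow> real) \<Rightarrow> bool" where
  "pointwise_bounded g \<longleftrightarrow> (\<forall>t. \<exists>B. \<forall>i j. \<bar>g i j t\<bar> \<le> B)"

end

theory Submission
  imports Defs
begin

text \<open>
  Write \<open>\<phi>\<^sub>l\<^sub>j = g\<^sub>l\<^sub>j \<bar>h\<^sub>l\<^sub>j\<bar>\<^sup>2\<close>, so that \<open>h\<^sub>l\<^sub>l' = \<Sum>\<^sub>j \<phi>\<^sub>l\<^sub>j\<close>. For \<open>t \<ge> T\<close> the sign condition gives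
  \<open>\<epsilon>\<^sub>l \<phi>\<^sub>l\<^sub>j \<ge> 0\<close> for \<open>j \<ge> l\<close>, hence \<open>\<Sum>\<^sub>j \<bar>\<phi>\<^sub>l\<^sub>j\<bar> = \<epsilon>\<^sub>l h\<^sub>l\<^sub>l' + R\<^sub>l\<close> with the nonnegative defect
  \<open>R\<^sub>l = \<Sum>j<l. \<bar>\<phi>\<^sub>l\<^sub>j\<bar> - \<epsilon>\<^sub>l \<phi>\<^sub>l\<^sub>j\<close>. Integrated over \<open>[T, x]\<close>, the first term is at most
  \<open>2 sup \<bar>h\<^sub>l\<^sub>l\<bar>\<close>, finite because \<open>H\<close> is bounded in Hilbert-Schmidt norm, and \<open>R\<^sub>l\<close> is integrable
  as soon as the finitely many energies \<open>\<integral>\<bar>\<phi>\<^sub>l\<^sub>j\<bar>\<close>, \<open>j < l\<close>, are finite. Balancedness bounds these by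
  \<open>\<integral>\<bar>\<phi>\<^sub>j\<^sub>l\<bar>\<close>, i.e. by earlier rows, so strong induction on \<open>l\<close> makes every row of energies
  summable. Then \<open>h\<^sub>l\<^sub>l'\<close> is integrable on \<open>[T, \<infinity>)\<close> and \<open>h\<^sub>l\<^sub>l\<close> converges.

  Under the gap condition \<open>\<bar>g\<^sub>l\<^sub>j\<bar> \<ge> c\<^sub>l\<close> the row of energies dominates
  \<open>\<Sum>j\<noteq>l. \<integral>\<bar>h\<^sub>l\<^sub>j\<bar>\<^sup>2 = \<integral>\<parallel>H e\<^sub>l - h\<^sub>l\<^sub>l e\<^sub>l\<parallel>\<^sup>2\<close> (Parseval). If \<open>H' e\<^sub>l\<close> is bounded, the integrand
  \<open>\<parallel>H e\<^sub>l - h\<^sub>l\<^sub>l e\<^sub>l\<parallel>\<^sup>2\<close> is Lipschitz, and an integrable Lipschitz function tends to \<open>0\<close>.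
\<close>

section \<open>Orthonormal expansions and Hilbert-Schmidt paths\<close>

lemma orthonormal_partial_sum_approximation:
  fixes e :: "nat \<Rightarrow> 'a::real_inner"
  assumes ortho: "\<And>i j. inner (e i) (e j) = (if i = j then 1 else 0)"
  shows "(\<Sum>j<n. (inner v (e j))\<^sup>2) \<le> (norm v)\<^sup>2"
    and "w \<in> span (e ` {..<n}) \<Longrightarrow> (norm v)\<^sup>2 - (\<Sum>j<n. (inner v (e j))\<^sup>2) \<le> (norm (v - w))\<^sup>2"
proof -
  define P where "P = (\<Sum>j<n. inner v (e j) *\<^sub>R e j)"
  have residual_orth: "inner (v - P) (e k) = 0" if "k < n" for k
  proof -
    have "inner P (e k) = (\<Sum>j<n. inner v (e j) * (if j = k then 1 else 0))"
      by (simp add: P_def inner_sum_left ortho)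
    also have "\<dots> = inner v (e k)"
      using that by (simp add: if_distrib sum.delta cong: if_cong)
    finally show ?thesis by (simp add: inner_diff_left)
  qed
  have "inner (v - P) P = (\<Sum>j<n. inner v (e j) * inner (v - P) (e j))"
    by (subst (2) P_def) (simp add: inner_sum_right)
  then have "inner (v - P) P = 0" by (simp add: residual_orth)
  then have "inner P P = inner v P" by (simp add: inner_diff_left)
  moreover have "inner v P = (\<Sum>j<n. (inner v (e j))\<^sup>2)"
    by (simp add: P_def inner_sum_right power2_eq_square)
  ultimately have residual: "(norm (v - P))\<^sup>2 = (norm v)\<^sup>2 - (\<Sum>j<n. (inner v (e j))\<^sup>2)"
    by (simp add: power2_norm_eq_inner inner_diff_left inner_diff_right inner_commute)
  then show "(\<Sum>j<n. (inner v (e j))\<^sup>2) \<le> (norm v)\<^sup>2"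
    by (metis diff_ge_0_iff_ge zero_le_power2)
  assume "w \<in> span (e ` {..<n})"
  moreover have "P \<in> span (e ` {..<n})"
    unfolding P_def by (intro span_sum span_scale span_base) auto
  ultimately have "P - w \<in> span (e ` {..<n})" by (simp add: span_diff)
  then have "orthogonal (v - P) (P - w)"
    by (rule orthogonal_to_span) (auto simp: orthogonal_def residual_orth)
  from norm_add_Pythagorean[OF this] residual
  show "(norm v)\<^sup>2 - (\<Sum>j<n. (inner v (e j))\<^sup>2) \<le> (norm (v - w))\<^sup>2" by simp
qed

lemma span_range_in_initial_span:
  assumes "w \<in> span (range (e :: nat \<Rightarrow> 'a::real_vector))"
  obtains n where "w \<in> span (e ` {..<n})"
proof -
  from assms obtain S r where S: "finite S" "S \<subseteq> range e" and w: "w = (\<Sum>x\<in>S. r x *\<^sub>R x)"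
    unfolding span_explicit by blast
  from finite_subset_image[OF S] obtain C where C: "finite C" "S = e ` C" by auto
  from finite_nat_bounded[OF C(1)] obtain n where "C \<subseteq> {..<n}" by auto
  with C have "S \<subseteq> e ` {..<n}" by auto
  moreover have "w \<in> span S" unfolding w by (intro span_sum span_scale span_base)
  ultimately show thesis by (meson span_mono subsetD that)
qed

lemma hilbert_basis_parseval:
  fixes e :: "nat \<Rightarrow> 'a::{real_inner,complete_space}"
  assumes "hilbert_basis e"
  shows "(\<lambda>j. (inner v (e j))\<^sup>2) sums (norm v)\<^sup>2"
  unfolding sums_def
proof (rule LIMSEQ_I)
  fix r :: real assume "0 < r"
  have ortho: "inner (e i) (e j) = (if i = j then 1 else 0)" for i j
    using assms unfolding hilbert_basis_def by blast
  let ?s = "\<lambda>n. \<Sum>j<n. (inner v (e j))\<^sup>2"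
  have "v \<in> closure (span (range e))" using assms unfolding hilbert_basis_def by simp
  then obtain w where w: "w \<in> span (range e)" "dist w v < sqrt r"
    unfolding closure_approachable using \<open>0 < r\<close> by (meson real_sqrt_gt_zero)
  from w(1) obtain N where N: "w \<in> span (e ` {..<N})" by (rule span_range_in_initial_span)
  have "(norm (v - w))\<^sup>2 < (sqrt r)\<^sup>2"
    using w(2) by (intro power_strict_mono) (auto simp: dist_norm norm_minus_commute)
  then have "(norm (v - w))\<^sup>2 < r" using \<open>0 < r\<close> by simp
  with orthonormal_partial_sum_approximation(2)[OF ortho N, of v]
  have "(norm v)\<^sup>2 - ?s N < r" by linarith
  moreover have "?s N \<le> ?s n" if "N \<le> n" for n
    using that by (intro sum_mono2) auto
  moreover have "?s n \<le> (norm v)\<^sup>2" for n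
    by (rule orthonormal_partial_sum_approximation(1)[OF ortho])
  ultimately show "\<exists>N. \<forall>n\<ge>N. norm (?s n - (norm v)\<^sup>2) < r"
    by (intro exI[of _ N]) (smt (verit, best) real_norm_def)
qed

lemma norm_le_hs_norm:
  assumes "summable (\<lambda>n. (norm (A (e n)))\<^sup>2)"
  shows "norm (A (e l)) \<le> hs_norm e A"
proof -
  have "(norm (A (e l)))\<^sup>2 \<le> (\<Sum>n. (norm (A (e n)))\<^sup>2)"
    using sum_le_suminf[OF assms, of "{l}"] by simp
  then show ?thesis unfolding hs_norm_def by (simp add: real_le_rsqrt)
qed

lemma summable_norm_sq_diff:
  fixes a b :: "nat \<Rightarrow> 'a::real_normed_vector"
  assumes "summable (\<lambda>n. (norm (a n))\<^sup>2)" "summable (\<lambda>n. (norm (b n))\<^sup>2)"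
  shows "summable (\<lambda>n. (norm (a n - b n))\<^sup>2)"
proof (rule summable_comparison_test')
  show "summable (\<lambda>n. 2 * ((norm (a n))\<^sup>2 + (norm (b n))\<^sup>2))"
    using assms by (intro summable_mult summable_add)
  show "norm ((norm (a n - b n))\<^sup>2) \<le> 2 * ((norm (a n))\<^sup>2 + (norm (b n))\<^sup>2)" for n
  proof -
    have "(norm (a n - b n))\<^sup>2 \<le> (norm (a n) + norm (b n))\<^sup>2"
      by (simp add: norm_triangle_ineq4 power_mono)
    also have "\<dots> \<le> 2 * ((norm (a n))\<^sup>2 + (norm (b n))\<^sup>2)"
      using sum_squares_bound[of "norm (a n)" "norm (b n)"] by (simp add: power2_sum)
    finally show ?thesis by simp
  qed
qed

lemma summable_norm_sq_scaleR:
  "summable (\<lambda>n. (norm (a n))\<^sup>2) \<Longrightarrow> summable (\<lambda>n. (norm (c *\<^sub>R a n))\<^sup>2)"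
  unfolding norm_scaleR power_mult_distrib by (rule summable_mult)

lemma HS_C1_summable:
  assumes "HS_C1 e H H'"
  shows "summable (\<lambda>n. (norm (H t (e n)))\<^sup>2)" "summable (\<lambda>n. (norm (H' t (e n)))\<^sup>2)"
  using assms unfolding HS_C1_def is_HS_def by blast+

lemma HS_C1_has_vector_derivative:
  assumes C1: "HS_C1 e H H'"
  shows "((\<lambda>t. H t (e l)) has_vector_derivative H' t (e l)) (at t)"
proof -
  let ?R = "\<lambda>s x. H s x - H t x - (s - t) *\<^sub>R H' t x"
  have le: "norm (?R s (e l)) / \<bar>s - t\<bar> \<le> hs_norm e (?R s) / \<bar>s - t\<bar>" for s
  proof -
    note HS = HS_C1_summable[OF C1]
    have "summable (\<lambda>n. (norm (H s (e n) - H t (e n) - (s - t) *\<^sub>R H' t (e n)))\<^sup>2)"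
      by (rule summable_norm_sq_diff[OF summable_norm_sq_diff[OF HS(1) HS(1)] summable_norm_sq_scaleR[OF HS(2)]])
    then show ?thesis by (intro divide_right_mono norm_le_hs_norm) auto
  qed
  have lim: "((\<lambda>s. hs_norm e (?R s) / \<bar>s - t\<bar>) \<longlongrightarrow> 0) (at t)"
    using C1 unfolding HS_C1_def by blast
  have "((\<lambda>s. norm (?R s (e l)) / norm (s - t)) \<longlongrightarrow> 0) (at t)"
    by (rule Lim_null_comparison[OF _ lim]) (use le in auto)
  then show ?thesis
    unfolding has_vector_derivative_def has_derivative_iff_norm
    by (auto intro: bounded_linear_scaleR_left)
qed

lemma HS_C1_continuous_derivative:
  assumes C1: "HS_C1 e H H'"
  shows "isCont (\<lambda>t. H' t (e l)) t"
proof -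
  have le: "norm (H' s (e l) - H' t (e l)) \<le> hs_norm e (\<lambda>x. H' s x - H' t x)" for s
    using summable_norm_sq_diff[OF HS_C1_summable(2)[OF C1] HS_C1_summable(2)[OF C1]]
    by (intro norm_le_hs_norm) simp
  have lim: "((\<lambda>s. hs_norm e (\<lambda>x. H' s x - H' t x)) \<longlongrightarrow> 0) (at t)"
    using C1 unfolding HS_C1_def by blast
  have "((\<lambda>s. H' s (e l) - H' t (e l)) \<longlongrightarrow> 0) (at t)"
    by (rule Lim_null_comparison[OF _ lim]) (use le in auto)
  then show ?thesis
    unfolding isCont_def by (simp add: LIM_zero_iff)
qed

section \<open>Integrability on half-lines\<close>

lemma set_integrable_Ici_if_bounded:
  fixes f :: "real \<Rightarrow> real"
  assumes nonneg: "\<And>t. a \<le> t \<Longrightarrow> 0 \<le> f t"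
    and int: "\<And>x. a \<le> x \<Longrightarrow> set_integrable lborel {a..x} f"
    and bound: "\<And>x. a \<le> x \<Longrightarrow> (LINT t:{a..x}|lborel. f t) \<le> M"
  shows "set_integrable lborel {a..} f"
proof -
  let ?A = "\<lambda>n::nat. {a..a + real n}"
  have "incseq (\<lambda>n. LINT t:?A n|lborel. f t)"
  proof (rule incseq_SucI)
    fix n
    show "(LINT t:?A n|lborel. f t) \<le> (LINT t:?A (Suc n)|lborel. f t)"
      unfolding set_lebesgue_integral_def
      by (rule integral_mono)
        (use int[of "a + real n"] int[of "a + real (Suc n)"] nonneg
          in \<open>auto simp: set_integrable_def split: split_indicator\<close>)
  qed
  moreover have "\<forall>n. (LINT t:?A n|lborel. f t) \<le> M" using bound by simp
  ultimately obtain L where "(\<lambda>n. LINT t:?A n|lborel. f t) \<longlonglongrightarrow> L" "\<forall>n. (LINT t:?A n|lborel. f t) \<le> L"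
    by (rule incseq_convergent)
  then have "set_integrable lborel (\<Union>n. ?A n) f"
    by (intro pos_integrable_to_top[where l=L] int nonneg) (auto simp: mono_def)
  moreover have "(\<Union>n. ?A n) = {a..}"
    by auto (metis add.commute diff_le_eq real_arch_simple)
  ultimately show ?thesis by simp
qed

text \<open>Barbalat's argument: on \<open>[x, x + r]\<close> a Lipschitz \<open>f\<close> stays above \<open>f x - K r\<close>, while the
  integral over such windows tends to \<open>0\<close>.\<close>

lemma tendsto_zero_if_lipschitz_integrable:
  fixes f :: "real \<Rightarrow> real"
  assumes lip: "K-lipschitz_on {a..} f" and int: "set_integrable lborel {a..} f"
    and nonneg: "\<And>t. a \<le> t \<Longrightarrow> 0 \<le> f t"
  shows "(f \<longlongrightarrow> 0) at_top"
proof -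
  have "0 \<le> K" by (rule lipschitz_on_nonneg[OF lip])
  have f_int: "f integrable_on {x..y}" if "a \<le> x" for x y
    using continuous_on_subset[OF lipschitz_on_continuous_on[OF lip]] that
    by (intro integrable_continuous_interval) auto
  define \<Phi> where "\<Phi> x = integral {a..x} f" for x
  have "((\<lambda>x. LINT t:{a..x}|lborel. f t) \<longlongrightarrow> (LINT t:{a..}|lborel. f t)) at_top"
    by (rule tendsto_set_lebesgue_integral_at_top[OF _ int]) auto
  moreover have "\<forall>\<^sub>F x in at_top. (LINT t:{a..x}|lborel. f t) = \<Phi> x"
    unfolding \<Phi>_def eventually_at_top_linorder
    by (intro exI[of _ a] allI impI set_borel_integral_eq_integral(2) set_integrable_subset[OF int]) auto
  ultimately have \<Phi>_lim: "(\<Phi> \<longlongrightarrow> (LINT t:{a..}|lborel. f t)) at_top"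
    by (rule Lim_transform_eventually)
  have window: "((\<lambda>x. \<Phi> (x + r) - \<Phi> x) \<longlongrightarrow> 0) at_top" for r
  proof -
    have "filterlim (\<lambda>x. x + r) at_top at_top"
      using filterlim_tendsto_add_at_top[OF tendsto_const[of r] filterlim_ident]
      by (simp add: add.commute)
    from tendsto_diff[OF filterlim_compose[OF \<Phi>_lim this] \<Phi>_lim] show ?thesis by simp
  qed
  have lower: "r * (f x - K * r) \<le> \<Phi> (x + r) - \<Phi> x" if "a \<le> x" "0 < r" for x r
  proof -
    have "\<Phi> (x + r) - \<Phi> x = integral {x..x + r} f"
      using Henstock_Kurzweil_Integration.integral_combine[of a x "x + r" f] that f_int[of a]
      by (simp add: \<Phi>_def)
    moreover have "integral {x..x + r} (\<lambda>_. f x - K * r) \<le> integral {x..x + r} f"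
    proof (rule integral_le)
      fix s assume s: "s \<in> {x..x + r}"
      have "\<bar>f x - f s\<bar> \<le> K * \<bar>x - s\<bar>"
        using lipschitz_onD[OF lip, of x s] s that by (auto simp: dist_real_def)
      also have "\<dots> \<le> K * r" using s \<open>0 \<le> K\<close> by (intro mult_left_mono) auto
      finally show "f x - K * r \<le> f s" by linarith
    qed (use f_int that in auto)
    moreover have "integral {x..x + r} (\<lambda>_. f x - K * r) = r * (f x - K * r)"
      using that by simp
    ultimately show ?thesis by linarith
  qed
  show ?thesis
  proof (rule tendstoI)
    fix \<epsilon> :: real assume "0 < \<epsilon>"
    define r where "r = \<epsilon> / (2 * (K + 1))"
    have "0 < r" "K * r \<le> \<epsilon> / 2"
      using \<open>0 < \<epsilon>\<close> \<open>0 \<le> K\<close> by (auto simp: r_def field_simps)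
    have "\<forall>\<^sub>F x in at_top. \<bar>\<Phi> (x + r) - \<Phi> x\<bar> < r * (\<epsilon> / 2)"
      using tendstoD[OF window, of "r * (\<epsilon> / 2)"] \<open>0 < r\<close> \<open>0 < \<epsilon>\<close> by simp
    with eventually_ge_at_top[of a] show "\<forall>\<^sub>F x in at_top. dist (f x) 0 < \<epsilon>"
    proof eventually_elim
      case (elim x)
      with lower[of x r] \<open>0 < r\<close> have "r * (f x - K * r) < r * (\<epsilon> / 2)" by linarith
      with \<open>0 < r\<close> have "f x - K * r < \<epsilon> / 2" by simp
      with \<open>K * r \<le> \<epsilon> / 2\<close> nonneg[of x] elim show ?case by simp
    qed
  qed
qed

lemma set_integrable_iff_nn_integral_less_top:
  fixes f :: "'a \<Rightarrow> real"
  assumes [measurable]: "A \<in> sets M" "f \<in> borel_measurable M"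
  shows "set_integrable M A f \<longleftrightarrow> (\<integral>\<^sup>+ x \<in> A. ennreal \<bar>f x\<bar> \<partial>M) < \<infinity>"
proof -
  have "(\<integral>\<^sup>+ x. ennreal (norm (indicator A x *\<^sub>R f x)) \<partial>M) = (\<integral>\<^sup>+ x \<in> A. ennreal \<bar>f x\<bar> \<partial>M)"
    by (rule nn_integral_cong) (simp split: split_indicator)
  then show ?thesis
    unfolding set_integrable_def integrable_iff_bounded by simp
qed

section \<open>Coefficients of a bounded \<open>C\<^sup>1\<close> Hilbert-Schmidt path\<close>

locale HS_C1_path =
  fixes e :: "nat \<Rightarrow> 'a::{real_inner,complete_space}"
    and H H' :: "real \<Rightarrow> 'a \<Rightarrow> 'a"
    and h :: "nat \<Rightarrow> nat \<Rightarrow> real \<Rightarrow> real"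
    and B :: real
  assumes basis: "hilbert_basis e"
    and C1: "HS_C1 e H H'"
    and h_def: "\<And>i j t. h i j t = inner (H t (e i)) (e j)"
    and hs_norm_bounded: "\<And>t. hs_norm e (H t) \<le> B"
begin

lemma inner_basis: "inner (e i) (e j) = (if i = j then 1 else 0)"
  using basis unfolding hilbert_basis_def by blast

lemma norm_basis [simp]: "norm (e j) = 1"
  using inner_basis[of j j] by (simp add: norm_eq_sqrt_inner)

lemma norm_H_le: "norm (H t (e l)) \<le> B"
  using norm_le_hs_norm[of "H t" e l, OF HS_C1_summable(1)[OF C1]] hs_norm_bounded order_trans by blast

lemma abs_h_le: "\<bar>h l j t\<bar> \<le> B"
  using Cauchy_Schwarz_ineq2[of "H t (e l)" "e j"] norm_H_le[of t l] by (simp add: h_def)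

lemma H_has_vector_derivative: "((\<lambda>t. H t (e l)) has_vector_derivative H' t (e l)) (at t)"
  by (rule HS_C1_has_vector_derivative[OF C1])

lemma h_continuous_on: "continuous_on S (h l j)"
proof -
  have "isCont (h l j) t" for t
    unfolding h_def[abs_def]
    by (intro continuous_intros has_vector_derivative_continuous[OF H_has_vector_derivative])
  then show ?thesis by (simp add: continuous_at_imp_continuous_on)
qed

lemma h_measurable [measurable]: "h l j \<in> borel_measurable lborel"
  using borel_measurable_continuous_onI[OF h_continuous_on] by simp

definition h_diag_deriv :: "nat \<Rightarrow> real \<Rightarrow> real"
  where "h_diag_deriv l t = inner (H' t (e l)) (e l)"

lemma h_diag_deriv_continuous_on: "continuous_on S (h_diag_deriv l)"
  unfolding h_diag_deriv_def[abs_def]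
  by (intro continuous_at_imp_continuous_on ballI continuous_intros HS_C1_continuous_derivative[OF C1])

lemma h_diag_deriv_measurable [measurable]: "h_diag_deriv l \<in> borel_measurable lborel"
  using borel_measurable_continuous_onI[OF h_diag_deriv_continuous_on] by simp

lemma h_diag_has_real_derivative: "(h l l has_real_derivative h_diag_deriv l t) (at t)"
proof -
  have "((\<lambda>t. inner (H t (e l)) (e l))
      has_derivative (\<lambda>x. inner (H t (e l)) 0 + inner (x *\<^sub>R H' t (e l)) (e l))) (at t)"
    using has_derivative_inner[OF H_has_vector_derivative[unfolded has_vector_derivative_def]
        has_derivative_const] .
  moreover have "(\<lambda>x. inner (H t (e l)) 0 + inner (x *\<^sub>R H' t (e l)) (e l)) = (*) (h_diag_deriv l t)"
    by (auto simp: h_diag_deriv_def)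
  ultimately show ?thesis
    unfolding has_field_derivative_def h_def[abs_def] by simp
qed

lemma h_diag_FTC:
  assumes "a \<le> b"
  shows "set_integrable lborel {a..b} (h_diag_deriv l)"
    and "(LINT t:{a..b}|lborel. h_diag_deriv l t) = h l l b - h l l a"
proof -
  show "set_integrable lborel {a..b} (h_diag_deriv l)"
    by (rule borel_integrable_atLeastAtMost'[OF h_diag_deriv_continuous_on])
  show "(LINT t:{a..b}|lborel. h_diag_deriv l t) = h l l b - h l l a"
    unfolding set_lebesgue_integral_def
    using h_diag_has_real_derivative assms
    by (intro integral_FTC_atLeastAtMost h_diag_deriv_continuous_on)
      (auto simp: has_real_derivative_iff_has_vector_derivative intro: has_vector_derivative_at_within)
qed

definition off_diag :: "nat \<Rightarrow> real \<Rightarrow> 'a"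
  where "off_diag l t = H t (e l) - h l l t *\<^sub>R e l"

lemma off_diag_parseval: "(\<lambda>j. if j = l then 0 else \<bar>h l j t\<bar>\<^sup>2) sums (norm (off_diag l t))\<^sup>2"
proof -
  have "(\<lambda>j. (inner (off_diag l t) (e j))\<^sup>2) = (\<lambda>j. if j = l then 0 else \<bar>h l j t\<bar>\<^sup>2)"
    by (auto simp: off_diag_def inner_diff_left h_def inner_basis)
  with hilbert_basis_parseval[OF basis, of "off_diag l t"] show ?thesis by simp
qed

lemma norm_off_diag_le: "norm (off_diag l t) \<le> 2 * B"
  using norm_triangle_ineq4[of "H t (e l)" "h l l t *\<^sub>R e l"] norm_H_le[of t l] abs_h_le[of l l t]
  by (simp add: off_diag_def)

lemma off_diag_has_vector_derivative:
  "(off_diag l has_vector_derivative H' t (e l) - h_diag_deriv l t *\<^sub>R e l) (at t)"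
proof -
  have "(off_diag l has_vector_derivative H' t (e l) - (h l l t *\<^sub>R 0 + h_diag_deriv l t *\<^sub>R e l)) (at t)"
    unfolding off_diag_def[abs_def]
    by (intro has_vector_derivative_diff H_has_vector_derivative has_vector_derivative_scaleR
        h_diag_has_real_derivative has_vector_derivative_const)
  then show ?thesis by simp
qed

lemma suminf_off_diag_energy:
  assumes [measurable]: "A \<in> sets lborel"
  shows "(\<Sum>j. if j = l then 0 else \<integral>\<^sup>+ t \<in> A. ennreal (\<bar>h l j t\<bar>\<^sup>2) \<partial>lborel)
    = (\<integral>\<^sup>+ t \<in> A. ennreal ((norm (off_diag l t))\<^sup>2) \<partial>lborel)"
proof -
  let ?G = "\<lambda>j t. ennreal (if j = l then 0 else \<bar>h l j t\<bar>\<^sup>2) * indicator A t"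
  have "(\<Sum>j. if j = l then 0 else \<integral>\<^sup>+ t \<in> A. ennreal (\<bar>h l j t\<bar>\<^sup>2) \<partial>lborel)
      = (\<Sum>j. \<integral>\<^sup>+ t. ?G j t \<partial>lborel)"
    by (rule suminf_cong) simp
  also have "\<dots> = (\<integral>\<^sup>+ t. (\<Sum>j. ?G j t) \<partial>lborel)"
    by (rule nn_integral_suminf[symmetric]) measurable
  also have "\<dots> = (\<integral>\<^sup>+ t \<in> A. ennreal ((norm (off_diag l t))\<^sup>2) \<partial>lborel)"
  proof (rule nn_integral_cong)
    fix t
    have "(\<Sum>j. ennreal (if j = l then 0 else \<bar>h l j t\<bar>\<^sup>2)) = ennreal ((norm (off_diag l t))\<^sup>2)"
      by (rule suminf_ennreal_eq[OF _ off_diag_parseval]) simp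
    then show "(\<Sum>j. ?G j t) = ennreal ((norm (off_diag l t))\<^sup>2) * indicator A t"
      by (simp only: ennreal_suminf_multc)
  qed
  finally show ?thesis .
qed

lemma norm_off_diag_sq_has_real_derivative:
  "((\<lambda>t. (norm (off_diag l t))\<^sup>2) has_real_derivative
      2 * inner (off_diag l t) (H' t (e l) - h_diag_deriv l t *\<^sub>R e l)) (at t)"
proof -
  let ?w = "H' t (e l) - h_diag_deriv l t *\<^sub>R e l"
  have d: "(off_diag l has_derivative (\<lambda>x. x *\<^sub>R ?w)) (at t)"
    using off_diag_has_vector_derivative unfolding has_vector_derivative_def .
  have "((\<lambda>t. inner (off_diag l t) (off_diag l t)) has_derivative
      (\<lambda>x. inner (off_diag l t) (x *\<^sub>R ?w) + inner (x *\<^sub>R ?w) (off_diag l t))) (at t)"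
    by (rule has_derivative_inner[OF d d])
  moreover have "(\<lambda>x. inner (off_diag l t) (x *\<^sub>R ?w) + inner (x *\<^sub>R ?w) (off_diag l t))
      = (*) (2 * inner (off_diag l t) ?w)"
    by (auto simp: inner_commute algebra_simps)
  ultimately show ?thesis by (simp add: has_field_derivative_def power2_norm_eq_inner)
qed

lemma off_diag_tendsto_zero:
  assumes finite: "(\<integral>\<^sup>+ t \<in> {a..}. ennreal ((norm (off_diag l t))\<^sup>2) \<partial>lborel) < \<infinity>"
    and H'_bounded: "\<And>t. norm (H' t (e l)) \<le> B'"
  shows "(off_diag l \<longlongrightarrow> 0) at_top"
proof -
  let ?f = "\<lambda>t. (norm (off_diag l t))\<^sup>2"
  have "continuous_on UNIV (off_diag l)"
    using off_diag_has_vector_derivative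
    by (intro continuous_at_imp_continuous_on ballI has_vector_derivative_continuous) blast
  then have "continuous_on UNIV ?f" by (intro continuous_intros)
  then have [measurable]: "?f \<in> borel_measurable lborel"
    using borel_measurable_continuous_onI by simp
  have "set_integrable lborel {a..} ?f"
    using finite by (simp add: set_integrable_iff_nn_integral_less_top)
  moreover have "(8 * B * B')-lipschitz_on {a..} ?f"
  proof (rule bounded_derivative_imp_lipschitz)
    show "(?f has_derivative (*) (2 * inner (off_diag l t) (H' t (e l) - h_diag_deriv l t *\<^sub>R e l)))
        (at t within {a..})" for t
      using norm_off_diag_sq_has_real_derivative
      by (auto simp: has_field_derivative_def intro: has_derivative_at_withinI)
    have "0 \<le> B" "0 \<le> B'"
      using norm_H_le[of 0 l] H'_bounded[of 0] by (auto intro: order_trans[OF norm_ge_zero])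
    then show "0 \<le> 8 * B * B'" by simp
    show "onorm ((*) (2 * inner (off_diag l t) (H' t (e l) - h_diag_deriv l t *\<^sub>R e l))) \<le> 8 * B * B'" for t
    proof (rule onorm_bound)
      have "\<bar>h_diag_deriv l t\<bar> \<le> norm (H' t (e l))"
        using Cauchy_Schwarz_ineq2[of "H' t (e l)" "e l"] by (simp add: h_diag_deriv_def)
      then have "norm (H' t (e l) - h_diag_deriv l t *\<^sub>R e l) \<le> 2 * B'"
        using norm_triangle_ineq4[of "H' t (e l)" "h_diag_deriv l t *\<^sub>R e l"] H'_bounded[of t] by simp
      then have "\<bar>inner (off_diag l t) (H' t (e l) - h_diag_deriv l t *\<^sub>R e l)\<bar> \<le> (2 * B) * (2 * B')"
        using Cauchy_Schwarz_ineq2 norm_off_diag_le \<open>0 \<le> B\<close>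
        by (meson mult_mono norm_ge_zero order_trans)
      then show "norm (2 * inner (off_diag l t) (H' t (e l) - h_diag_deriv l t *\<^sub>R e l) * x) \<le> 8 * B * B' * norm x" for x
        by (simp add: abs_mult mult_right_mono)
    qed (use \<open>0 \<le> 8 * B * B'\<close> in simp)
  qed simp
  ultimately have "(?f \<longlongrightarrow> 0) at_top"
    by (intro tendsto_zero_if_lipschitz_integrable) auto
  then have "((\<lambda>t. sqrt (?f t)) \<longlongrightarrow> 0) at_top"
    using tendsto_real_sqrt by fastforce
  then show ?thesis by (simp add: tendsto_norm_zero_iff)
qed

end

section \<open>Balanced diagonal dynamics\<close>

lemma balanced_AE_le:
  assumes "balanced g"
  obtains C where "0 \<le> C" "AE t in lborel. \<bar>g i j t\<bar> \<le> C * \<bar>g j i t\<bar>"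
proof -
  from assms obtain c B where c: "\<And>t. \<bar>g i j t\<bar> \<le> c t * \<bar>g j i t\<bar>" and B: "AE t in lborel. c t \<le> B"
    unfolding balanced_def by blast
  have "AE t in lborel. \<bar>g i j t\<bar> \<le> max B 0 * \<bar>g j i t\<bar>"
    using B
  proof eventually_elim
    case (elim t)
    have "c t * \<bar>g j i t\<bar> \<le> max B 0 * \<bar>g j i t\<bar>"
      using elim by (intro mult_right_mono) auto
    with c[of t] show ?case by linarith
  qed
  then show thesis by (rule that[rotated]) simp
qed

locale balanced_diagonal_flow = HS_C1_path e H H' h B
  for e :: "nat \<Rightarrow> 'a::{real_inner,complete_space}"
    and H H' :: "real \<Rightarrow> 'a \<Rightarrow> 'a"
    and h :: "nat \<Rightarrow> nat \<Rightarrow> real \<Rightarrow> real"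
    and B :: real +
  fixes g :: "nat \<Rightarrow> nat \<Rightarrow> real \<Rightarrow> real"
    and T :: real
    and \<epsilon> :: "nat \<Rightarrow> real"
  assumes h_balanced: "balanced h"
    and g_measurable [measurable]: "\<And>i j. g i j \<in> borel_measurable lborel"
    and g_balanced: "balanced g"
    and deriv_h_diag_sums: "\<And>i t. (\<lambda>j. g i j t * \<bar>h i j t\<bar>\<^sup>2) sums (deriv (h i i) t)"
    and sign: "\<And>l. \<epsilon> l \<in> {-1, 1}"
    and sign_condition: "\<And>t k l. T \<le> t \<Longrightarrow> l \<le> k \<Longrightarrow> 0 \<le> \<epsilon> l * g l k t"
begin

definition flux :: "nat \<Rightarrow> nat \<Rightarrow> real \<Rightarrow> real"
  where "flux l j t = g l j t * \<bar>h l j t\<bar>\<^sup>2"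

definition energy :: "nat \<Rightarrow> nat \<Rightarrow> ennreal"
  where "energy l j = (\<integral>\<^sup>+ t \<in> {T..}. ennreal (\<bar>g l j t\<bar> * \<bar>h l j t\<bar>\<^sup>2) \<partial>lborel)"

lemma flux_measurable [measurable]: "flux l j \<in> borel_measurable lborel"
  unfolding flux_def by measurable

lemma abs_flux: "\<bar>flux l j t\<bar> = \<bar>g l j t\<bar> * \<bar>h l j t\<bar>\<^sup>2"
  by (simp add: flux_def abs_mult)

lemma abs_sign [simp]: "\<bar>\<epsilon> l\<bar> = 1"
  using sign[of l] by auto

lemma flux_sums: "(\<lambda>j. flux l j t) sums h_diag_deriv l t"
  using deriv_h_diag_sums[of l t] DERIV_imp_deriv[OF h_diag_has_real_derivative]
  by (simp add: flux_def)

lemma energy_le_balanced: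
  obtains C where "energy l j \<le> ennreal C * energy j l"
proof -
  obtain C\<^sub>g where "0 \<le> C\<^sub>g" and g_le: "AE t in lborel. \<bar>g l j t\<bar> \<le> C\<^sub>g * \<bar>g j l t\<bar>"
    using g_balanced by (rule balanced_AE_le)
  obtain C\<^sub>h where "0 \<le> C\<^sub>h" and h_le: "AE t in lborel. \<bar>h l j t\<bar> \<le> C\<^sub>h * \<bar>h j l t\<bar>"
    using h_balanced by (rule balanced_AE_le)
  let ?C = "C\<^sub>g * C\<^sub>h\<^sup>2"
  have "AE t in lborel. \<bar>flux l j t\<bar> \<le> ?C * \<bar>flux j l t\<bar>"
    using g_le h_le
  proof eventually_elim
    case (elim t)
    have "\<bar>h l j t\<bar>\<^sup>2 \<le> C\<^sub>h\<^sup>2 * \<bar>h j l t\<bar>\<^sup>2"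
      using power_mono[OF elim(2), of 2] by (simp add: power_mult_distrib)
    with elim(1) have "\<bar>g l j t\<bar> * \<bar>h l j t\<bar>\<^sup>2 \<le> (C\<^sub>g * \<bar>g j l t\<bar>) * (C\<^sub>h\<^sup>2 * \<bar>h j l t\<bar>\<^sup>2)"
      by (intro mult_mono) auto
    then show ?case by (simp add: abs_flux ac_simps)
  qed
  then have "energy l j \<le> (\<integral>\<^sup>+ t. ennreal ?C * (ennreal \<bar>flux j l t\<bar> * indicator {T..} t) \<partial>lborel)"
    unfolding energy_def abs_flux[symmetric]
    by (intro nn_integral_mono_AE, elim AE_mp)
      (auto simp: ennreal_mult[symmetric] \<open>0 \<le> C\<^sub>g\<close> intro!: ennreal_leI split: split_indicator)
  also have "\<dots> = ennreal ?C * energy j l"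
    unfolding energy_def abs_flux[symmetric] by (rule nn_integral_cmult) measurable
  finally show thesis by (rule that)
qed

lemma energy_finite_if_transpose_summable:
  assumes "(\<Sum>i. energy j i) < \<infinity>"
  shows "energy l j < \<infinity>"
proof -
  obtain C where "energy l j \<le> ennreal C * energy j l" by (rule energy_le_balanced)
  moreover have "energy j l \<le> (\<Sum>i. energy j i)"
    using sum_le_suminf[of "energy j" "{l}"] by simp
  with assms have "energy j l < \<infinity>" by (simp add: le_less_trans)
  then have "ennreal C * energy j l < \<infinity>" by (simp add: ennreal_mult_less_top)
  ultimately show ?thesis by (simp add: le_less_trans)
qed

text \<open>By the sign condition only the entries below the diagonal keep \<open>\<epsilon> l * flux l j t\<close> from
  being \<open>\<bar>flux l j t\<bar>\<close>; their defect is collected here.\<close>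

definition lower_defect :: "nat \<Rightarrow> real \<Rightarrow> real"
  where "lower_defect l t = (\<Sum>j<l. \<bar>flux l j t\<bar> - \<epsilon> l * flux l j t)"

lemma lower_defect_measurable [measurable]: "lower_defect l \<in> borel_measurable lborel"
  unfolding lower_defect_def by measurable

lemma lower_defect_nonneg: "0 \<le> lower_defect l t"
  unfolding lower_defect_def
  by (intro sum_nonneg) (metis abs_ge_self abs_mult abs_sign diff_ge_0_iff_ge mult_1)

lemma set_integrable_lower_defect:
  assumes "\<And>j. j < l \<Longrightarrow> energy l j < \<infinity>"
  shows "set_integrable lborel {T..} (lower_defect l)"
proof -
  have "set_integrable lborel {T..} (flux l j)" if "j < l" for j
    using assms[OF that] by (simp add: set_integrable_iff_nn_integral_less_top energy_def abs_flux)
  then have "set_integrable lborel {T..} (\<lambda>t. \<bar>flux l j t\<bar> - \<epsilon> l * flux l j t)" if "j < l" for j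
    using that by (intro set_integral_diff set_integrable_abs set_integrable_mult_right)
  then have "integrable lborel (\<lambda>t. \<Sum>j<l. indicator {T..} t *\<^sub>R (\<bar>flux l j t\<bar> - \<epsilon> l * flux l j t))"
    unfolding set_integrable_def by (intro Bochner_Integration.integrable_sum) auto
  then show ?thesis
    unfolding lower_defect_def set_integrable_def by (simp add: sum_distrib_left)
qed

lemma abs_flux_sums:
  assumes "T \<le> t"
  shows "(\<lambda>j. \<bar>flux l j t\<bar>) sums (\<epsilon> l * h_diag_deriv l t + lower_defect l t)"
proof -
  let ?r = "\<lambda>j. if j < l then \<bar>flux l j t\<bar> - \<epsilon> l * flux l j t else 0"
  have r: "?r sums lower_defect l t"
    using sums_finite[of "{..<l}" ?r] by (simp add: lower_defect_def)
  have split: "\<epsilon> l * flux l j t + ?r j = \<bar>flux l j t\<bar>" for j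
  proof (cases "j < l")
    case False
    then have "0 \<le> \<epsilon> l * flux l j t"
      using sign_condition[OF assms, of l j] by (simp add: flux_def mult.assoc[symmetric])
    moreover have "\<bar>\<epsilon> l * flux l j t\<bar> = \<bar>flux l j t\<bar>" by (simp add: abs_mult)
    ultimately show ?thesis using False by simp
  qed simp
  from sums_add[OF sums_mult[OF flux_sums[of l t], of "\<epsilon> l"] r] show ?thesis
    unfolding split .
qed

definition total_abs_flux :: "nat \<Rightarrow> real \<Rightarrow> real"
  where "total_abs_flux l t = \<epsilon> l * h_diag_deriv l t + lower_defect l t"

lemma total_abs_flux_measurable [measurable]: "total_abs_flux l \<in> borel_measurable lborel"
  unfolding total_abs_flux_def by measurable

lemma total_abs_flux_nonneg: "T \<le> t \<Longrightarrow> 0 \<le> total_abs_flux l t"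
  unfolding total_abs_flux_def by (rule sums_le[OF _ sums_zero abs_flux_sums]) auto

lemma suminf_energy: "(\<Sum>j. energy l j) = (\<integral>\<^sup>+ t \<in> {T..}. ennreal \<bar>total_abs_flux l t\<bar> \<partial>lborel)"
proof -
  have "(\<Sum>j. energy l j) = (\<integral>\<^sup>+ t. (\<Sum>j. ennreal \<bar>flux l j t\<bar> * indicator {T..} t) \<partial>lborel)"
    unfolding energy_def abs_flux[symmetric] by (rule nn_integral_suminf[symmetric]) measurable
  also have "\<dots> = (\<integral>\<^sup>+ t \<in> {T..}. ennreal \<bar>total_abs_flux l t\<bar> \<partial>lborel)"
  proof (rule nn_integral_cong)
    fix t
    show "(\<Sum>j. ennreal \<bar>flux l j t\<bar> * indicator {T..} t) = ennreal \<bar>total_abs_flux l t\<bar> * indicator {T..} t"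
    proof (cases "T \<le> t")
      case True
      have "(\<Sum>j. ennreal \<bar>flux l j t\<bar>) = ennreal (total_abs_flux l t)"
        unfolding total_abs_flux_def by (rule suminf_ennreal_eq[OF _ abs_flux_sums[OF True]]) simp
      with total_abs_flux_nonneg[OF True]
      have "(\<Sum>j. ennreal \<bar>flux l j t\<bar>) = ennreal \<bar>total_abs_flux l t\<bar>" by simp
      then show ?thesis by (simp add: ennreal_suminf_multc)
    qed simp
  qed
  finally show ?thesis .
qed

lemma set_integrable_total_abs_flux:
  assumes lower: "\<And>j. j < l \<Longrightarrow> energy l j < \<infinity>"
  shows "set_integrable lborel {T..} (total_abs_flux l)"
proof (rule set_integrable_Ici_if_bounded)
  note R_int = set_integrable_lower_defect[OF lower]
  fix x assume "T \<le> x"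
  then have R_int_x: "set_integrable lborel {T..x} (lower_defect l)"
    by (intro set_integrable_subset[OF R_int]) auto
  note FTC = h_diag_FTC[OF \<open>T \<le> x\<close>, of l]
  show "set_integrable lborel {T..x} (total_abs_flux l)"
    unfolding total_abs_flux_def using FTC(1) R_int_x by (intro set_integral_add set_integrable_mult_right)
  have "(LINT t:{T..x}|lborel. total_abs_flux l t)
      = \<epsilon> l * (h l l x - h l l T) + (LINT t:{T..x}|lborel. lower_defect l t)"
    unfolding total_abs_flux_def using FTC R_int_x by (simp add: set_integral_add)
  also have "\<epsilon> l * (h l l x - h l l T) \<le> 2 * B"
  proof -
    have "\<epsilon> l * (h l l x - h l l T) \<le> \<bar>h l l x - h l l T\<bar>"
      using abs_ge_self[of "\<epsilon> l * (h l l x - h l l T)"] by (simp add: abs_mult)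
    with abs_h_le[of l l x] abs_h_le[of l l T] show ?thesis by linarith
  qed
  also have "(LINT t:{T..x}|lborel. lower_defect l t) \<le> (LINT t:{T..}|lborel. lower_defect l t)"
    unfolding set_lebesgue_integral_def using R_int_x R_int lower_defect_nonneg
    by (intro integral_mono) (auto simp: set_integrable_def split: split_indicator)
  finally show "(LINT t:{T..x}|lborel. total_abs_flux l t) \<le> 2 * B + (LINT t:{T..}|lborel. lower_defect l t)"
    by simp
qed (rule total_abs_flux_nonneg)

lemma suminf_energy_finite: "(\<Sum>j. energy l j) < \<infinity>"
proof (induction l rule: less_induct)
  case (less l)
  then have "set_integrable lborel {T..} (total_abs_flux l)"
    by (intro set_integrable_total_abs_flux energy_finite_if_transpose_summable)
  then show ?case by (simp add: suminf_energy set_integrable_iff_nn_integral_less_top)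
qed

lemma set_integrable_h_diag_deriv: "set_integrable lborel {T..} (h_diag_deriv l)"
proof -
  have "set_integrable lborel {T..} (total_abs_flux l)"
    using suminf_energy_finite[of l] by (simp add: suminf_energy set_integrable_iff_nn_integral_less_top)
  moreover have "set_integrable lborel {T..} (lower_defect l)"
    by (intro set_integrable_lower_defect energy_finite_if_transpose_summable suminf_energy_finite)
  ultimately have "set_integrable lborel {T..} (\<lambda>t. \<epsilon> l * (total_abs_flux l t - lower_defect l t))"
    by (intro set_integrable_mult_right set_integral_diff)
  moreover have "\<epsilon> l * (total_abs_flux l t - lower_defect l t) = h_diag_deriv l t" for t
    using sign[of l] by (auto simp: total_abs_flux_def)
  ultimately show ?thesis by simp
qed

lemma h_diag_tendsto: "(h l l \<longlongrightarrow> h l l T + (LINT t:{T..}|lborel. h_diag_deriv l t)) at_top"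
proof -
  have "((\<lambda>x. h l l T + (LINT t:{T..x}|lborel. h_diag_deriv l t))
      \<longlongrightarrow> h l l T + (LINT t:{T..}|lborel. h_diag_deriv l t)) at_top"
    by (intro tendsto_add tendsto_const tendsto_set_lebesgue_integral_at_top set_integrable_h_diag_deriv) auto
  moreover have "\<forall>\<^sub>F x in at_top. h l l T + (LINT t:{T..x}|lborel. h_diag_deriv l t) = h l l x"
    using eventually_ge_at_top[of T] by eventually_elim (simp add: h_diag_FTC(2))
  ultimately show ?thesis by (rule Lim_transform_eventually)
qed

lemma off_diag_energy_finite:
  assumes gap: "\<exists>c>0. \<forall>j t. j \<noteq> l \<longrightarrow> T \<le> t \<longrightarrow> c \<le> \<bar>g l j t\<bar>"
  shows "(\<integral>\<^sup>+ t \<in> {T..}. ennreal ((norm (off_diag l t))\<^sup>2) \<partial>lborel) < \<infinity>"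
proof -
  from gap obtain c where "0 < c" and c: "\<And>j t. j \<noteq> l \<Longrightarrow> T \<le> t \<Longrightarrow> c \<le> \<bar>g l j t\<bar>" by blast
  have term_le: "(if j = l then 0 else \<integral>\<^sup>+ t \<in> {T..}. ennreal (\<bar>h l j t\<bar>\<^sup>2) \<partial>lborel)
      \<le> ennreal (1 / c) * energy l j" for j
  proof (cases "j = l")
    case False
    have "(\<integral>\<^sup>+ t \<in> {T..}. ennreal (\<bar>h l j t\<bar>\<^sup>2) \<partial>lborel)
        \<le> (\<integral>\<^sup>+ t. ennreal (1 / c) * (ennreal (\<bar>g l j t\<bar> * \<bar>h l j t\<bar>\<^sup>2) * indicator {T..} t) \<partial>lborel)"
    proof (rule nn_integral_mono)
      fix t
      show "ennreal (\<bar>h l j t\<bar>\<^sup>2) * indicator {T..} t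
          \<le> ennreal (1 / c) * (ennreal (\<bar>g l j t\<bar> * \<bar>h l j t\<bar>\<^sup>2) * indicator {T..} t)"
      proof (cases "T \<le> t")
        case True
        have "c * \<bar>h l j t\<bar>\<^sup>2 \<le> \<bar>g l j t\<bar> * \<bar>h l j t\<bar>\<^sup>2"
          by (rule mult_right_mono[OF c[OF False True]]) simp
        then have "\<bar>h l j t\<bar>\<^sup>2 \<le> (1 / c) * (\<bar>g l j t\<bar> * \<bar>h l j t\<bar>\<^sup>2)"
          using \<open>0 < c\<close> by (simp add: field_simps)
        then have "ennreal (\<bar>h l j t\<bar>\<^sup>2) \<le> ennreal (1 / c) * ennreal (\<bar>g l j t\<bar> * \<bar>h l j t\<bar>\<^sup>2)"
          using \<open>0 < c\<close> by (simp add: ennreal_mult[symmetric] ennreal_leI)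
        with True show ?thesis by simp
      qed simp
    qed
    also have "\<dots> = ennreal (1 / c) * energy l j"
      unfolding energy_def by (rule nn_integral_cmult) measurable
    finally show ?thesis using False by simp
  qed simp
  have "(\<integral>\<^sup>+ t \<in> {T..}. ennreal ((norm (off_diag l t))\<^sup>2) \<partial>lborel)
      = (\<Sum>j. if j = l then 0 else \<integral>\<^sup>+ t \<in> {T..}. ennreal (\<bar>h l j t\<bar>\<^sup>2) \<partial>lborel)"
    by (rule suminf_off_diag_energy[symmetric]) simp
  also have "\<dots> \<le> (\<Sum>j. ennreal (1 / c) * energy l j)"
    by (rule suminf_le[OF term_le]) auto
  also have "\<dots> = ennreal (1 / c) * (\<Sum>j. energy l j)"
    by (rule ennreal_suminf_cmult)
  also have "\<dots> < \<infinity>"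
    using suminf_energy_finite[of l] by (simp add: ennreal_mult_less_top)
  finally show ?thesis .
qed

lemma H_basis_tendsto:
  assumes gap: "\<exists>c>0. \<forall>j t. j \<noteq> l \<longrightarrow> T \<le> t \<longrightarrow> c \<le> \<bar>g l j t\<bar>"
    and H'_bounded: "\<exists>B'. \<forall>t. norm (H' t (e l)) \<le> B'"
  shows "((\<lambda>t. H t (e l)) \<longlongrightarrow> Lim at_top (h l l) *\<^sub>R e l) at_top"
proof -
  from H'_bounded obtain B' where "\<And>t. norm (H' t (e l)) \<le> B'" by blast
  with off_diag_energy_finite[OF gap] have off_diag_lim: "(off_diag l \<longlongrightarrow> 0) at_top"
    by (rule off_diag_tendsto_zero)
  have "Lim at_top (h l l) = h l l T + (LINT t:{T..}|lborel. h_diag_deriv l t)"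
    by (rule tendsto_Lim[OF _ h_diag_tendsto]) simp
  with h_diag_tendsto have "(h l l \<longlongrightarrow> Lim at_top (h l l)) at_top" by simp
  with off_diag_lim have "((\<lambda>t. off_diag l t + h l l t *\<^sub>R e l) \<longlongrightarrow> 0 + Lim at_top (h l l) *\<^sub>R e l) at_top"
    by (intro tendsto_add tendsto_scaleR tendsto_const)
  then show ?thesis by (simp add: off_diag_def)
qed

end

theorem theorem1p1:
  fixes e :: "nat \<Rightarrow> 'a::{real_inner,complete_space}"
    and H H' :: "real \<Rightarrow> 'a \<Rightarrow> 'a"
    and h g :: "nat \<Rightarrow> nat \<Rightarrow> real \<Rightarrow> real"
    and T :: real and \<epsilon> :: "nat \<Rightarrow> real"
  assumes basis: "hilbert_basis e"
    and C1: "HS_C1 e H H'"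
    and h_def: "\<And>i j t. h i j t = inner (H t (e i)) (e j)"
    and bdd: "\<exists>B. \<forall>t. hs_norm e (H t) \<le> B"
    and h_bal: "balanced h"
    and g_meas: "\<And>i j. g i j \<in> borel_measurable lborel"
    and g_pb: "pointwise_bounded g"
    and g_bal: "balanced g"
    and deriv_eq: "\<And>i t. (\<lambda>j. g i j t * \<bar>h i j t\<bar>\<^sup>2) sums (deriv (h i i) t)"
    and T_pos: "T > 0"
    and eps: "\<And>l. \<epsilon> l \<in> {-1, 1}"
    and sign: "\<And>t k l. t \<ge> T \<Longrightarrow> k \<ge> l \<Longrightarrow> \<epsilon> l * g l k t \<ge> 0"
  shows "(\<forall>l. (\<Sum>j. \<integral>\<^sup>+ t \<in> {T..}. ennreal (\<bar>g l j t\<bar> * \<bar>h l j t\<bar>\<^sup>2) \<partial>lborel) < \<infinity>)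
    \<and> (\<forall>l. \<exists>L. (h l l \<longlongrightarrow> L) at_top)
    \<and> ((\<forall>l. \<exists>c>0. \<forall>j t. j \<noteq> l \<longrightarrow> t \<ge> T \<longrightarrow> \<bar>g l j t\<bar> \<ge> c) \<longrightarrow>
         (\<forall>l. (\<Sum>j. if j = l then 0 else \<integral>\<^sup>+ t \<in> {T..}. ennreal (\<bar>h l j t\<bar>\<^sup>2) \<partial>lborel)
               = (\<integral>\<^sup>+ t \<in> {T..}. ennreal ((norm (H t (e l) - h l l t *\<^sub>R e l))\<^sup>2) \<partial>lborel)
            \<and> (\<integral>\<^sup>+ t \<in> {T..}. ennreal ((norm (H t (e l) - h l l t *\<^sub>R e l))\<^sup>2) \<partial>lborel) < \<infinity>)
       \<and> ((\<forall>l. \<exists>B. \<forall>t. norm (H' t (e l)) \<le> B) \<longrightarrow>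
            (\<forall>l. ((\<lambda>t. H t (e l)) \<longlongrightarrow> Lim at_top (h l l) *\<^sub>R e l) at_top)))"
proof -
  obtain B where "\<And>t. hs_norm e (H t) \<le> B" using bdd by blast
  then interpret balanced_diagonal_flow e H H' h B g T \<epsilon>
    using basis C1 h_def h_bal g_meas g_bal deriv_eq eps sign by unfold_locales
  have "\<exists>L. (h l l \<longlongrightarrow> L) at_top" for l
    using h_diag_tendsto by blast
  moreover note suminf_off_diag_energy[of "{T..}", simplified]
  ultimately show ?thesis
    using suminf_energy_finite off_diag_energy_finite H_basis_tendsto
    unfolding energy_def off_diag_def by auto
qed

end
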